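(* Fix an RWA-P instance (setting as in the context) and $\alpha,\beta>0$ with $\beta/\alpha>|R|(M-2)+2$, where $M=\max_{r\in R}\big(\max_{w\in W^r}B^r_w+\max_{p\in P^r}B^r_p\big)$. Let $B^r_{w_{\min}}=\min_{w\in W^r}B^r_w$ and $B^r_{p_{\min}}=\min_{p\in P^r}B^r_p$. If $$\rho>\beta(|R|+1)-\alpha\Big(1+\sum_{r\in R}\big(B^r_{w_{\min}}+B^r_{p_{\min}}\big)\Big),\qquad \rho>0,$$ then every minimizer over all binary vectors $(x,y)$ of $$Q(x,y)=f(x,y)+\rho\sum_{r}\Big(\sum_{w}x^r_w-\sum_{p}y^r_p\Big)^2+\rho\sum_r\Big(\sum_w x^r_w-1\Big)\Big(\sum_w x^r_w\Big)+\rho\!\!\sum_{(r,w,p)\in\mathcal C_1}\!\!x^r_wy^r_p+\rho\!\!\!\sum_{(r_1,r_2,w,p)\in\mathcal C_2}\!\!\!x^{r_1}_wy^{r_2}_p+\rho\!\!\!\sum_{(r_1,r_2,w_1,w_2)\in\mathcal C_3}\!\!\!x^{r_1}_{w_1}x^{r_2}_{w_2}+\rho\!\!\!\sum_{(r_1,r_2,p_1,p_2)\in\mathcal C_4}\!\!\!y^{r_1}_{p_1}y^{r_2}_{p_2}$$ is a feasible solution that minimizes $f$ over all feasible solutions.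
   Context: An RWA-P instance consists of: a directed graph $G=(V,E)$ (parallel arcs allowed) whose arcs are called links; a finite set $\Lambda$ of wavelengths; a finite set $R$ of requests, each with a source $s^r$ and distinct destination $t^r$; and for each $r$ nonempty finite sets $W^r$ (working) and $P^r$ (protection) of lightpaths, each lightpath $\ell$ being a directed $s^r$–$t^r$ path in $G$ with link set $E[\ell]$, length $B^r_\ell=|E[\ell]|\ge1$, and wavelength $\Lambda[\ell]\in\Lambda$. Conflict sets: $\mathcal C_1=\{(r,w,p): w\in W^r,p\in P^r, E[w]\cap E[p]\ne\emptyset\}$; $\mathcal C_2=\{(r_1,r_2,w,p): r_1\ne r_2, w\in W^{r_1}, p\in P^{r_2}, \Lambda[w]=\Lambda[p], E[w]\cap E[p]\ne\emptyset\}$; $\mathcal C_3=\{(r_1,r_2,w_1,w_2): w_i\in W^{r_i}, (r_1,w_1)\ne(r_2,w_2), \Lambda[w_1]=\Lambda[w_2], E[w_1]\cap E[w_2]\neq\emptyset\}$; $\mathcal C_4$ analogously for distinct protection lightpaths. A solution is binary $x=(x^r_w)$, $y=(y^r_p)$; feasible if for every $r$, $\sum_w x^r_w=\sum_p y^r_p$ and $\sum_w x^r_w\le1$, and for each tuple in $\mathcal C_1,\dots,\mathcal C_4$ the two corresponding variables sum to at most 1. $f(x,y)=\alpha\sum_r\big(\sum_wB^r_wx^r_w+\sum_pB^r_py^r_p\big)-\beta\sum_r\sum_w x^r_w$. *)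

theory Defs
  imports Complex_Main "Graph_Theory.Arc_Walk"
begin

record ('v, 'e, 'c, 'r, 'l) rwap =
  graph :: "('v, 'e) pre_digraph"
  wls   :: "'c set"
  reqs  :: "'r set"
  src   :: "'r \<Rightarrow> 'v"
  dst   :: "'r \<Rightarrow> 'v"
  work  :: "'r \<Rightarrow> 'l set"
  prot  :: "'r \<Rightarrow> 'l set"
  lpath :: "'l \<Rightarrow> 'e list"
  lwl   :: "'l \<Rightarrow> 'c"

definition rwap_instance :: "('v, 'e, 'c, 'r, 'l) rwap \<Rightarrow> bool" where
  "rwap_instance I \<longleftrightarrow>
     fin_digraph (graph I) \<and> finite (wls I) \<and> finite (reqs I) \<and>
     (\<forall>r\<in>reqs I. src I r \<noteq> dst I r \<and>
        finite (work I r) \<and> work I r \<noteq> {} \<and>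
        finite (prot I r) \<and> prot I r \<noteq> {} \<and>
        (\<forall>l\<in>work I r \<union> prot I r.
            pre_digraph.apath (graph I) (src I r) (lpath I l) (dst I r) \<and>
            lwl I l \<in> wls I))"

definition links :: "('v, 'e, 'c, 'r, 'l) rwap \<Rightarrow> 'l \<Rightarrow> 'e set" where
  "links I l = set (lpath I l)"

definition blen :: "('v, 'e, 'c, 'r, 'l) rwap \<Rightarrow> 'l \<Rightarrow> real" where
  "blen I l = real (card (links I l))"

definition C1 :: "('v, 'e, 'c, 'r, 'l) rwap \<Rightarrow> ('r \<times> 'l \<times> 'l) set" where
  "C1 I = {(r, w, p). r \<in> reqs I \<and> w \<in> work I r \<and> p \<in> prot I r \<and>
                      links I w \<inter> links I p \<noteq> {}}"

definition C2 :: "('v, 'e, 'c, 'r, 'l) rwap \<Rightarrow> ('r \<times> 'r \<times> 'l \<times> 'l) set" where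
  "C2 I = {(r1, r2, w, p). r1 \<in> reqs I \<and> r2 \<in> reqs I \<and> r1 \<noteq> r2 \<and>
             w \<in> work I r1 \<and> p \<in> prot I r2 \<and> lwl I w = lwl I p \<and>
             links I w \<inter> links I p \<noteq> {}}"

definition C3 :: "('v, 'e, 'c, 'r, 'l) rwap \<Rightarrow> ('r \<times> 'r \<times> 'l \<times> 'l) set" where
  "C3 I = {(r1, r2, w1, w2). r1 \<in> reqs I \<and> r2 \<in> reqs I \<and>
             w1 \<in> work I r1 \<and> w2 \<in> work I r2 \<and> (r1, w1) \<noteq> (r2, w2) \<and>
             lwl I w1 = lwl I w2 \<and> links I w1 \<inter> links I w2 \<noteq> {}}"

definition C4 :: "('v, 'e, 'c, 'r, 'l) rwap \<Rightarrow> ('r \<times> 'r \<times> 'l \<times> 'l) set" where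
  "C4 I = {(r1, r2, p1, p2). r1 \<in> reqs I \<and> r2 \<in> reqs I \<and>
             p1 \<in> prot I r1 \<and> p2 \<in> prot I r2 \<and> (r1, p1) \<noteq> (r2, p2) \<and>
             lwl I p1 = lwl I p2 \<and> links I p1 \<inter> links I p2 \<noteq> {}}"

text \<open>A binary vector (x, y): x r w \<in> {0,1} for r \<in> R, w \<in> W^r, and similarly y;
entries outside the index set are fixed to 0 (canonical representation).\<close>
definition binary :: "('v, 'e, 'c, 'r, 'l) rwap \<Rightarrow> ('r \<Rightarrow> 'l \<Rightarrow> real) \<Rightarrow> ('r \<Rightarrow> 'l \<Rightarrow> real) \<Rightarrow> bool" where
  "binary I x y \<longleftrightarrow>
     (\<forall>r w. x r w \<in> {0, 1} \<and> y r w \<in> {0, 1}) \<and>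
     (\<forall>r w. \<not> (r \<in> reqs I \<and> w \<in> work I r) \<longrightarrow> x r w = 0) \<and>
     (\<forall>r p. \<not> (r \<in> reqs I \<and> p \<in> prot I r) \<longrightarrow> y r p = 0)"

definition feasible :: "('v, 'e, 'c, 'r, 'l) rwap \<Rightarrow> ('r \<Rightarrow> 'l \<Rightarrow> real) \<Rightarrow> ('r \<Rightarrow> 'l \<Rightarrow> real) \<Rightarrow> bool" where
  "feasible I x y \<longleftrightarrow> binary I x y \<and>
     (\<forall>r\<in>reqs I. (\<Sum>w\<in>work I r. x r w) = (\<Sum>p\<in>prot I r. y r p) \<and>
                  (\<Sum>w\<in>work I r. x r w) \<le> 1) \<and>
     (\<forall>(r, w, p)\<in>C1 I. x r w + y r p \<le> 1) \<and>
     (\<forall>(r1, r2, w, p)\<in>C2 I. x r1 w + y r2 p \<le> 1) \<and>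
     (\<forall>(r1, r2, w1, w2)\<in>C3 I. x r1 w1 + x r2 w2 \<le> 1) \<and>
     (\<forall>(r1, r2, p1, p2)\<in>C4 I. y r1 p1 + y r2 p2 \<le> 1)"

definition fobj :: "('v, 'e, 'c, 'r, 'l) rwap \<Rightarrow> real \<Rightarrow> real \<Rightarrow> ('r \<Rightarrow> 'l \<Rightarrow> real) \<Rightarrow> ('r \<Rightarrow> 'l \<Rightarrow> real) \<Rightarrow> real" where
  "fobj I \<alpha> \<beta> x y =
     \<alpha> * (\<Sum>r\<in>reqs I. (\<Sum>w\<in>work I r. blen I w * x r w) + (\<Sum>p\<in>prot I r. blen I p * y r p))
     - \<beta> * (\<Sum>r\<in>reqs I. \<Sum>w\<in>work I r. x r w)"

definition Qobj :: "('v, 'e, 'c, 'r, 'l) rwap \<Rightarrow> real \<Rightarrow> real \<Rightarrow> real \<Rightarrow> ('r \<Rightarrow> 'l \<Rightarrow> real) \<Rightarrow> ('r \<Rightarrow> 'l \<Rightarrow> real) \<Rightarrow> real" where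
  "Qobj I \<alpha> \<beta> \<rho> x y =
     fobj I \<alpha> \<beta> x y
     + \<rho> * (\<Sum>r\<in>reqs I. ((\<Sum>w\<in>work I r. x r w) - (\<Sum>p\<in>prot I r. y r p))^2)
     + \<rho> * (\<Sum>r\<in>reqs I. ((\<Sum>w\<in>work I r. x r w) - 1) * (\<Sum>w\<in>work I r. x r w))
     + \<rho> * (\<Sum>(r, w, p)\<in>C1 I. x r w * y r p)
     + \<rho> * (\<Sum>(r1, r2, w, p)\<in>C2 I. x r1 w * y r2 p)
     + \<rho> * (\<Sum>(r1, r2, w1, w2)\<in>C3 I. x r1 w1 * x r2 w2)
     + \<rho> * (\<Sum>(r1, r2, p1, p2)\<in>C4 I. y r1 p1 * y r2 p2)"

definition Mconst :: "('v, 'e, 'c, 'r, 'l) rwap \<Rightarrow> real" where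
  "Mconst I = Max ((\<lambda>r. Max (blen I ` work I r) + Max (blen I ` prot I r)) ` reqs I)"

end

theory Submission
  imports Defs
begin

text \<open>The zero solution is feasible with \<open>Q = 0\<close>, and \<open>Q = f\<close> on feasible solutions, so it suffices
  to show \<open>Q > 0\<close> at every infeasible binary point. \<open>Q\<close> splits into a cost per request plus
  \<open>\<rho>\<close> times the number of violated conflict constraints. If \<open>n\<close> working and \<open>m\<close> protection
  lightpaths are chosen for request \<open>r\<close>, its cost is at least \<open>\<alpha> (b\<^sub>w + b\<^sub>p) - \<beta>\<close>, where \<open>b\<^sub>w\<close>
  and \<open>b\<^sub>p\<close> are its shortest working and protection lengths, and exceeds this by \<open>\<rho> - \<beta> + \<alpha>\<close>
  unless \<open>n = m \<le> 1\<close>. This needs \<open>\<alpha> (b\<^sub>w + b\<^sub>p) \<le> \<beta>\<close>, which is where the bound on \<open>\<beta>/\<alpha>\<close> enters.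
  The bound on \<open>\<rho>\<close> says exactly that the sum of the baseline costs plus one violation
  is positive.\<close>

lemma penalized_count_lower_bound:
  fixes n m :: nat and \<alpha> \<beta> \<rho> a b :: real
  assumes "0 < \<alpha>" "\<alpha> \<le> a" "\<alpha> \<le> b" "a + b \<le> \<beta>" "\<beta> - \<alpha> < \<rho>"
  shows "a + b - \<beta> + (if n = m \<and> n \<le> 1 then 0 else \<rho> - \<beta> + \<alpha>)
         \<le> a * n + b * m - \<beta> * n + \<rho> * ((real n - real m)\<^sup>2 + (real n - 1) * real n)"
proof -
  have nonneg: "0 \<le> b * m" "0 \<le> \<rho> * (real n - real m)\<^sup>2"
    using assms by simp_all
  consider "n = m" "n \<le> 1" | "n \<le> 1" "n \<noteq> m" | "2 \<le> n" by linarith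
  then show ?thesis
  proof cases
    case 1
    then consider "n = 0" "m = 0" | "n = 1" "m = 1" by linarith
    then show ?thesis using assms by cases simp_all
  next
    case 2
    have "\<bar>1\<bar> \<le> \<bar>real n - real m\<bar>" using \<open>n \<noteq> m\<close> by linarith
    then have "1 \<le> (real n - real m)\<^sup>2" by (simp only: abs_le_square_iff power_one)
    then have "\<rho> \<le> \<rho> * (real n - real m)\<^sup>2"
      using assms by simp
    moreover have "\<rho> * ((real n - real m)\<^sup>2 + (real n - 1) * real n) = \<rho> * (real n - real m)\<^sup>2"
      and "a + b + \<alpha> - 2 * \<beta> \<le> a * n - \<beta> * n"
      using 2 assms by (auto simp: le_Suc_eq)
    moreover have "(if n = m \<and> n \<le> 1 then 0 else \<rho> - \<beta> + \<alpha>) = \<rho> - \<beta> + \<alpha>"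
      using 2 by simp
    ultimately show ?thesis using nonneg by linarith
  next
    case 3
    have "2 * (\<rho> * real n) - 2 * \<rho> \<le> \<rho> * ((real n - 1) * real n)"
      using assms 3 mult_left_mono[of 2 "real n" "\<rho> * (real n - 1)"] by (simp add: algebra_simps)
    \<comment> \<open>\<open>2 \<rho> \<ge> \<beta>\<close>, since \<open>\<rho> > \<beta> - \<alpha>\<close> and \<open>2 \<alpha> \<le> a + b \<le> \<beta>\<close>\<close>
    moreover have "0 \<le> 2 * (\<rho> * real n) - \<beta> * real n - 4 * \<rho> + 2 * \<beta>"
      using assms 3 mult_nonneg_nonneg[of "2 * \<rho> - \<beta>" "real n - 2"] by (simp add: algebra_simps)
    moreover have "2 * a \<le> a * n" using assms 3 by simp
    moreover have "\<rho> * ((real n - real m)\<^sup>2 + (real n - 1) * real n)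
        = \<rho> * (real n - real m)\<^sup>2 + \<rho> * ((real n - 1) * real n)"
      by (simp add: distrib_left)
    moreover have "(if n = m \<and> n \<le> 1 then 0 else \<rho> - \<beta> + \<alpha>) = \<rho> - \<beta> + \<alpha>"
      using 3 by simp
    ultimately show ?thesis using assms nonneg by linarith
  qed
qed

lemma sum_binary_eq_card:
  fixes f :: "'a \<Rightarrow> real"
  assumes "finite A" and "\<And>a. a \<in> A \<Longrightarrow> f a \<in> {0, 1}"
  shows "sum f A = real (card {a\<in>A. f a = 1})"
proof -
  have "sum f A = (\<Sum>a\<in>A. if f a = 1 then 1 else 0)"
    using assms(2) by (intro sum.cong) force+
  also have "\<dots> = real (card {a\<in>A. f a = 1})"
    using assms(1) by (simp add: sum.If_cases Int_def conj_commute)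
  finally show ?thesis .
qed

lemma rwap_instance_finite_reqs: "rwap_instance I \<Longrightarrow> finite (reqs I)"
  by (simp add: rwap_instance_def)

lemma rwap_instance_lightpaths:
  assumes "rwap_instance I" and "r \<in> reqs I"
  shows "finite (work I r)" "work I r \<noteq> {}" "finite (prot I r)" "prot I r \<noteq> {}"
  using assms by (simp_all add: rwap_instance_def)

lemma blen_ge_1:
  assumes inst: "rwap_instance I" and r: "r \<in> reqs I" and l: "l \<in> work I r \<union> prot I r"
  shows "1 \<le> blen I l"
proof -
  have "pre_digraph.apath (graph I) (src I r) (lpath I l) (dst I r)" and "src I r \<noteq> dst I r"
    using inst r l unfolding rwap_instance_def by auto
  then have "lpath I l \<noteq> []"
    by (auto simp: pre_digraph.apath_def pre_digraph.awalk_def pre_digraph.cas.simps)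
  then show ?thesis
    by (simp add: blen_def links_def Suc_le_eq card_gt_0_iff)
qed

lemma Min_blen_ge_1:
  assumes "rwap_instance I" and "r \<in> reqs I"
  shows "1 \<le> Min (blen I ` work I r)" and "1 \<le> Min (blen I ` prot I r)"
  using assms blen_ge_1[OF assms] rwap_instance_lightpaths[OF assms] by simp_all

lemma Min_blen_le_Mconst:
  assumes "rwap_instance I" and "r \<in> reqs I"
  shows "Min (blen I ` work I r) + Min (blen I ` prot I r) \<le> Mconst I"
proof -
  obtain w p where "w \<in> work I r" and "p \<in> prot I r"
    using rwap_instance_lightpaths[OF assms] by blast
  then have "Min (blen I ` work I r) \<le> Max (blen I ` work I r)"
    and "Min (blen I ` prot I r) \<le> Max (blen I ` prot I r)"
    using rwap_instance_lightpaths[OF assms] by (meson Max_ge Min_le finite_imageI imageI order_trans)+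
  moreover have "Max (blen I ` work I r) + Max (blen I ` prot I r) \<le> Mconst I"
    unfolding Mconst_def using assms rwap_instance_finite_reqs by (intro Max_ge) auto
  ultimately show ?thesis by linarith
qed

lemma beta_bounds_of_ratio:
  assumes inst: "rwap_instance I" and \<alpha>_pos: "0 < \<alpha>"
    and ratio: "\<beta> / \<alpha> > real (card (reqs I)) * (Mconst I - 2) + 2"
  shows "\<And>r. r \<in> reqs I \<Longrightarrow> \<alpha> * (Min (blen I ` work I r) + Min (blen I ` prot I r)) < \<beta>"
    and "\<alpha> < \<beta>"
proof -
  show lengths: "\<alpha> * (Min (blen I ` work I r) + Min (blen I ` prot I r)) < \<beta>" if r: "r \<in> reqs I" for r
  proof -
    have "2 \<le> Mconst I"
      using Min_blen_ge_1[OF inst r] Min_blen_le_Mconst[OF inst r] by linarith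
    moreover have "1 \<le> card (reqs I)"
      using r rwap_instance_finite_reqs[OF inst] by (simp add: Suc_le_eq card_gt_0_iff) blast
    ultimately have "Mconst I \<le> real (card (reqs I)) * (Mconst I - 2) + 2"
      using mult_right_mono[of 1 "real (card (reqs I))" "Mconst I - 2"] by simp
    then have "Mconst I < \<beta> / \<alpha>" using ratio by linarith
    then have "\<alpha> * Mconst I < \<beta>" using \<alpha>_pos by (simp add: pos_less_divide_eq mult.commute)
    then show ?thesis
      using Min_blen_le_Mconst[OF inst r] \<alpha>_pos by (smt (verit) mult_left_mono)
  qed
  show "\<alpha> < \<beta>"
  proof (cases "reqs I = {}")
    case True
    then show ?thesis using ratio \<alpha>_pos by (simp add: field_simps)
  next
    case False
    then obtain r where r: "r \<in> reqs I" by blast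
    show ?thesis
      using lengths[OF r] Min_blen_ge_1[OF inst r] \<alpha>_pos
        mult_left_mono[of 2 "Min (blen I ` work I r) + Min (blen I ` prot I r)" \<alpha>] by linarith
  qed
qed

definition work_count :: "('v, 'e, 'c, 'r, 'l) rwap \<Rightarrow> ('r \<Rightarrow> 'l \<Rightarrow> real) \<Rightarrow> 'r \<Rightarrow> real" where
  "work_count I x r = (\<Sum>w\<in>work I r. x r w)"

definition prot_count :: "('v, 'e, 'c, 'r, 'l) rwap \<Rightarrow> ('r \<Rightarrow> 'l \<Rightarrow> real) \<Rightarrow> 'r \<Rightarrow> real" where
  "prot_count I y r = (\<Sum>p\<in>prot I r. y r p)"

definition request_cost :: "('v, 'e, 'c, 'r, 'l) rwap \<Rightarrow> real \<Rightarrow> real \<Rightarrow> real \<Rightarrow>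
    ('r \<Rightarrow> 'l \<Rightarrow> real) \<Rightarrow> ('r \<Rightarrow> 'l \<Rightarrow> real) \<Rightarrow> 'r \<Rightarrow> real" where
  "request_cost I \<alpha> \<beta> \<rho> x y r =
     \<alpha> * ((\<Sum>w\<in>work I r. blen I w * x r w) + (\<Sum>p\<in>prot I r. blen I p * y r p))
     - \<beta> * work_count I x r
     + \<rho> * ((work_count I x r - prot_count I y r)\<^sup>2 + (work_count I x r - 1) * work_count I x r)"

definition conflict_free :: "('v, 'e, 'c, 'r, 'l) rwap \<Rightarrow> ('r \<Rightarrow> 'l \<Rightarrow> real) \<Rightarrow> ('r \<Rightarrow> 'l \<Rightarrow> real) \<Rightarrow> bool" where
  "conflict_free I x y \<longleftrightarrow>
     (\<forall>(r, w, p)\<in>C1 I. x r w + y r p \<le> 1) \<and>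
     (\<forall>(r1, r2, w, p)\<in>C2 I. x r1 w + y r2 p \<le> 1) \<and>
     (\<forall>(r1, r2, w1, w2)\<in>C3 I. x r1 w1 + x r2 w2 \<le> 1) \<and>
     (\<forall>(r1, r2, p1, p2)\<in>C4 I. y r1 p1 + y r2 p2 \<le> 1)"

definition conflict_penalty :: "('v, 'e, 'c, 'r, 'l) rwap \<Rightarrow> ('r \<Rightarrow> 'l \<Rightarrow> real) \<Rightarrow> ('r \<Rightarrow> 'l \<Rightarrow> real) \<Rightarrow> real" where
  "conflict_penalty I x y =
     (\<Sum>(r, w, p)\<in>C1 I. x r w * y r p) + (\<Sum>(r1, r2, w, p)\<in>C2 I. x r1 w * y r2 p)
     + (\<Sum>(r1, r2, w1, w2)\<in>C3 I. x r1 w1 * x r2 w2) + (\<Sum>(r1, r2, p1, p2)\<in>C4 I. y r1 p1 * y r2 p2)"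

lemma feasible_iff:
  "feasible I x y \<longleftrightarrow> binary I x y \<and>
     (\<forall>r\<in>reqs I. work_count I x r = prot_count I y r \<and> work_count I x r \<le> 1) \<and> conflict_free I x y"
  unfolding feasible_def conflict_free_def work_count_def prot_count_def by blast

lemma Qobj_eq_sum_request_cost:
  "Qobj I \<alpha> \<beta> \<rho> x y = (\<Sum>r\<in>reqs I. request_cost I \<alpha> \<beta> \<rho> x y r) + \<rho> * conflict_penalty I x y"
  unfolding Qobj_def fobj_def request_cost_def conflict_penalty_def work_count_def prot_count_def
  by (simp add: sum.distrib sum_subtractf sum_distrib_left distrib_left right_diff_distrib)

lemma binary_values:
  assumes "binary I x y"
  shows "x r w \<in> {0, 1}" and "y r w \<in> {0, 1}"
  using assms by (simp_all add: binary_def)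

lemma work_count_eq_card:
  assumes "rwap_instance I" and "binary I x y" and "r \<in> reqs I"
  shows "work_count I x r = real (card {w\<in>work I r. x r w = 1})"
  unfolding work_count_def
  using rwap_instance_lightpaths[OF assms(1,3)] binary_values[OF assms(2)]
  by (intro sum_binary_eq_card) auto

lemma prot_count_eq_card:
  assumes "rwap_instance I" and "binary I x y" and "r \<in> reqs I"
  shows "prot_count I y r = real (card {p\<in>prot I r. y r p = 1})"
  unfolding prot_count_def
  using rwap_instance_lightpaths[OF assms(1,3)] binary_values[OF assms(2)]
  by (intro sum_binary_eq_card) auto

lemma finite_conflict_sets:
  assumes "rwap_instance I"
  shows "finite (C1 I)" "finite (C2 I)" "finite (C3 I)" "finite (C4 I)"
proof -
  define L where "L = (\<Union>r\<in>reqs I. work I r \<union> prot I r)"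
  have R: "finite (reqs I)" using assms by (rule rwap_instance_finite_reqs)
  then have "finite L" unfolding L_def by (simp add: rwap_instance_lightpaths[OF assms])
  with R have "finite (reqs I \<times> L \<times> L)" "finite (reqs I \<times> reqs I \<times> L \<times> L)" by simp_all
  moreover have "C1 I \<subseteq> reqs I \<times> L \<times> L" and "C2 I \<subseteq> reqs I \<times> reqs I \<times> L \<times> L"
    and "C3 I \<subseteq> reqs I \<times> reqs I \<times> L \<times> L" and "C4 I \<subseteq> reqs I \<times> reqs I \<times> L \<times> L"
    unfolding C1_def C2_def C3_def C4_def L_def by auto
  ultimately show "finite (C1 I)" "finite (C2 I)" "finite (C3 I)" "finite (C4 I)"
    using finite_subset by blast+
qed

lemma conflict_penalty_eq_of_nat:
  assumes inst: "rwap_instance I" and bin: "binary I x y"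
  obtains k :: nat where "conflict_penalty I x y = real k" and "k = 0 \<longleftrightarrow> conflict_free I x y"
proof -
  note fin = finite_conflict_sets[OF inst] and val = binary_values[OF bin]
  have prod_val: "a * b \<in> {0, 1}" and prod_eq_1: "a * b = 1 \<longleftrightarrow> \<not> a + b \<le> 1"
    if "a \<in> {0, 1}" "b \<in> {0, 1}" for a b :: real
    using that by auto
  define V1 where "V1 = {t\<in>C1 I. (\<lambda>(r, w, p). x r w * y r p) t = 1}"
  define V2 where "V2 = {t\<in>C2 I. (\<lambda>(r1, r2, w, p). x r1 w * y r2 p) t = 1}"
  define V3 where "V3 = {t\<in>C3 I. (\<lambda>(r1, r2, w1, w2). x r1 w1 * x r2 w2) t = 1}"
  define V4 where "V4 = {t\<in>C4 I. (\<lambda>(r1, r2, p1, p2). y r1 p1 * y r2 p2) t = 1}"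
  have "(\<Sum>(r, w, p)\<in>C1 I. x r w * y r p) = real (card V1)"
    and "(\<Sum>(r1, r2, w, p)\<in>C2 I. x r1 w * y r2 p) = real (card V2)"
    and "(\<Sum>(r1, r2, w1, w2)\<in>C3 I. x r1 w1 * x r2 w2) = real (card V3)"
    and "(\<Sum>(r1, r2, p1, p2)\<in>C4 I. y r1 p1 * y r2 p2) = real (card V4)"
    unfolding V1_def V2_def V3_def V4_def
    by (intro sum_binary_eq_card fin, simp only: split_paired_all prod.case, intro prod_val val)+
  then have "conflict_penalty I x y = real (card V1 + card V2 + card V3 + card V4)"
    unfolding conflict_penalty_def by simp
  moreover have "conflict_free I x y \<longleftrightarrow> V1 = {} \<and> V2 = {} \<and> V3 = {} \<and> V4 = {}"
    unfolding conflict_free_def V1_def V2_def V3_def V4_def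
    using val by (auto simp: prod_eq_1)
  moreover have "finite V1" "finite V2" "finite V3" "finite V4"
    unfolding V1_def V2_def V3_def V4_def using fin by simp_all
  ultimately show thesis
    using that[of "card V1 + card V2 + card V3 + card V4"] by simp
qed

lemma request_cost_lower_bound:
  assumes inst: "rwap_instance I" and bin: "binary I x y" and r: "r \<in> reqs I"
    and \<alpha>_pos: "0 < \<alpha>"
    and \<beta>_big: "\<alpha> * (Min (blen I ` work I r) + Min (blen I ` prot I r)) \<le> \<beta>"
    and \<rho>_big: "\<beta> - \<alpha> < \<rho>"
  shows "\<alpha> * (Min (blen I ` work I r) + Min (blen I ` prot I r)) - \<beta>
           + (if work_count I x r = prot_count I y r \<and> work_count I x r \<le> 1 then 0 else \<rho> - \<beta> + \<alpha>)
         \<le> request_cost I \<alpha> \<beta> \<rho> x y r"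
proof -
  define a where "a = \<alpha> * Min (blen I ` work I r)"
  define b where "b = \<alpha> * Min (blen I ` prot I r)"
  define n where "n = card {w\<in>work I r. x r w = 1}"
  define m where "m = card {p\<in>prot I r. y r p = 1}"
  note fin = rwap_instance_lightpaths[OF inst r]
  have x_nonneg: "0 \<le> x r w" and y_nonneg: "0 \<le> y r w" for w
    using binary_values[OF bin, of r w] by auto
  have n: "work_count I x r = real n" and m: "prot_count I y r = real m"
    unfolding n_def m_def by (rule work_count_eq_card[OF inst bin r] prot_count_eq_card[OF inst bin r])+
  have "Min (blen I ` work I r) * work_count I x r \<le> (\<Sum>w\<in>work I r. blen I w * x r w)"
    unfolding work_count_def sum_distrib_left
    using fin x_nonneg by (intro sum_mono mult_right_mono) auto
  then have work: "a * n \<le> \<alpha> * (\<Sum>w\<in>work I r. blen I w * x r w)"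
    unfolding a_def n using \<alpha>_pos by (simp add: mult.assoc)
  have "Min (blen I ` prot I r) * prot_count I y r \<le> (\<Sum>p\<in>prot I r. blen I p * y r p)"
    unfolding prot_count_def sum_distrib_left
    using fin y_nonneg by (intro sum_mono mult_right_mono) auto
  then have prot: "b * m \<le> \<alpha> * (\<Sum>p\<in>prot I r. blen I p * y r p)"
    unfolding b_def m using \<alpha>_pos by (simp add: mult.assoc)
  have "\<alpha> \<le> a" "\<alpha> \<le> b"
    unfolding a_def b_def using Min_blen_ge_1[OF inst r] \<alpha>_pos by simp_all
  then have "a + b - \<beta> + (if n = m \<and> n \<le> 1 then 0 else \<rho> - \<beta> + \<alpha>)
      \<le> a * n + b * m - \<beta> * n + \<rho> * ((real n - real m)\<^sup>2 + (real n - 1) * real n)"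
    using \<alpha>_pos \<beta>_big \<rho>_big unfolding a_def b_def
    by (intro penalized_count_lower_bound) (simp_all add: distrib_left)
  then show ?thesis
    using work prot unfolding request_cost_def n m a_def b_def by (simp add: distrib_left)
qed

lemma Qobj_eq_fobj_of_feasible:
  assumes inst: "rwap_instance I" and "feasible I x y"
  shows "Qobj I \<alpha> \<beta> \<rho> x y = fobj I \<alpha> \<beta> x y"
proof -
  have bin: "binary I x y" and cf: "conflict_free I x y"
    and sat: "\<And>r. r \<in> reqs I \<Longrightarrow> work_count I x r = prot_count I y r \<and> work_count I x r \<le> 1"
    using assms(2) unfolding feasible_iff by blast+
  obtain k :: nat where "conflict_penalty I x y = real k" and "k = 0 \<longleftrightarrow> conflict_free I x y"
    using conflict_penalty_eq_of_nat[OF inst bin] .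
  with cf have no_penalty: "conflict_penalty I x y = 0" by simp
  have "request_cost I \<alpha> \<beta> \<rho> x y r
      = \<alpha> * ((\<Sum>w\<in>work I r. blen I w * x r w) + (\<Sum>p\<in>prot I r. blen I p * y r p)) - \<beta> * work_count I x r"
    if r: "r \<in> reqs I" for r
  proof -
    have "card {w\<in>work I r. x r w = 1} \<le> 1"
      using sat[OF r] work_count_eq_card[OF inst bin r] by simp
    then have "work_count I x r = 0 \<or> work_count I x r = 1"
      using work_count_eq_card[OF inst bin r] by (auto simp: le_Suc_eq)
    then show ?thesis using sat[OF r] unfolding request_cost_def by auto
  qed
  then show ?thesis
    unfolding Qobj_eq_sum_request_cost no_penalty fobj_def work_count_def
    by (simp add: sum_subtractf sum_distrib_left)
qed

lemma Qobj_pos_of_infeasible: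
  assumes inst: "rwap_instance I" and \<alpha>_pos: "0 < \<alpha>" and \<alpha>_less_\<beta>: "\<alpha> < \<beta>"
    and \<beta>_big: "\<And>r. r \<in> reqs I \<Longrightarrow> \<alpha> * (Min (blen I ` work I r) + Min (blen I ` prot I r)) < \<beta>"
    and \<rho>_big: "\<rho> > \<beta> * (real (card (reqs I)) + 1)
                   - \<alpha> * (1 + (\<Sum>r\<in>reqs I. Min (blen I ` work I r) + Min (blen I ` prot I r)))"
    and bin: "binary I x y" and infeasible: "\<not> feasible I x y"
  shows "0 < Qobj I \<alpha> \<beta> \<rho> x y"
proof -
  define baseline where "baseline r = \<alpha> * (Min (blen I ` work I r) + Min (blen I ` prot I r)) - \<beta>" for r
  define sat where "sat r \<longleftrightarrow> work_count I x r = prot_count I y r \<and> work_count I x r \<le> 1" for r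
  define excess where "excess r = (if sat r then 0 else \<rho> - \<beta> + \<alpha>)" for r
  have baseline_nonpos: "(\<Sum>r\<in>reqs I. baseline r) \<le> 0"
    unfolding baseline_def using \<beta>_big by (intro sum_nonpos) (simp add: less_imp_le)
  have margin: "0 < (\<Sum>r\<in>reqs I. baseline r) + (\<rho> - \<beta> + \<alpha>)"
    using \<rho>_big unfolding baseline_def by (simp add: sum_subtractf sum_distrib_left algebra_simps)
  then have excess_nonneg: "0 \<le> excess r" for r
    unfolding excess_def using baseline_nonpos by simp
  have "(\<Sum>r\<in>reqs I. baseline r + excess r) \<le> (\<Sum>r\<in>reqs I. request_cost I \<alpha> \<beta> \<rho> x y r)"
    unfolding baseline_def excess_def sat_def using inst bin \<alpha>_pos \<beta>_big margin baseline_nonpos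
    by (intro sum_mono request_cost_lower_bound) (simp_all add: less_imp_le)
  then have costs: "(\<Sum>r\<in>reqs I. baseline r) + (\<Sum>r\<in>reqs I. excess r) \<le> (\<Sum>r\<in>reqs I. request_cost I \<alpha> \<beta> \<rho> x y r)"
    by (simp add: sum.distrib)
  obtain k :: nat where penalty: "conflict_penalty I x y = real k" and "k = 0 \<longleftrightarrow> conflict_free I x y"
    using conflict_penalty_eq_of_nat[OF inst bin] .
  have "\<rho> - \<beta> + \<alpha> \<le> (\<Sum>r\<in>reqs I. excess r) + \<rho> * conflict_penalty I x y"
  proof (cases "conflict_free I x y")
    case True
    with infeasible bin obtain r where r: "r \<in> reqs I" and "\<not> sat r"
      unfolding feasible_iff sat_def by blast
    then have "\<rho> - \<beta> + \<alpha> \<le> (\<Sum>r\<in>reqs I. excess r)"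
      using rwap_instance_finite_reqs[OF inst] excess_nonneg member_le_sum[of r "reqs I" excess]
      unfolding excess_def by simp
    moreover have "0 \<le> \<rho> * conflict_penalty I x y"
      using margin baseline_nonpos \<alpha>_less_\<beta> penalty by simp
    ultimately show ?thesis by linarith
  next
    case False
    then have "\<rho> \<le> \<rho> * conflict_penalty I x y"
      using penalty \<open>k = 0 \<longleftrightarrow> conflict_free I x y\<close> margin baseline_nonpos \<alpha>_less_\<beta> by simp
    then show ?thesis
      using \<alpha>_less_\<beta> sum_nonneg[of "reqs I" excess, OF excess_nonneg] by linarith
  qed
  then show ?thesis
    unfolding Qobj_eq_sum_request_cost using costs margin by linarith
qed

theorem proposition4:
  fixes I :: "('v, 'e, 'c, 'r, 'l) rwap" and \<alpha> \<beta> \<rho> :: real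
  assumes inst: "rwap_instance I"
    and \<alpha>_pos: "\<alpha> > 0" and \<beta>_pos: "\<beta> > 0"
    and ratio: "\<beta> / \<alpha> > real (card (reqs I)) * (Mconst I - 2) + 2"
    and \<rho>_big: "\<rho> > \<beta> * (real (card (reqs I)) + 1)
                   - \<alpha> * (1 + (\<Sum>r\<in>reqs I. Min (blen I ` work I r) + Min (blen I ` prot I r)))"
    and \<rho>_pos: "\<rho> > 0"
    and bin: "binary I x y"
    and minQ: "\<forall>x' y'. binary I x' y' \<longrightarrow> Qobj I \<alpha> \<beta> \<rho> x y \<le> Qobj I \<alpha> \<beta> \<rho> x' y'"
  shows "feasible I x y \<and> (\<forall>x' y'. feasible I x' y' \<longrightarrow> fobj I \<alpha> \<beta> x y \<le> fobj I \<alpha> \<beta> x' y')"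
proof -
  \<comment> \<open>\<open>\<beta>_pos\<close> and \<open>\<rho>_pos\<close> are redundant: \<open>\<beta> > \<alpha>\<close> and \<open>\<rho> > \<beta> - \<alpha>\<close> follow from the others.\<close>
  have \<alpha>_less_\<beta>: "\<alpha> < \<beta>"
    and \<beta>_big: "\<And>r. r \<in> reqs I \<Longrightarrow> \<alpha> * (Min (blen I ` work I r) + Min (blen I ` prot I r)) < \<beta>"
    using beta_bounds_of_ratio[OF inst \<alpha>_pos ratio] by blast+
  have "Qobj I \<alpha> \<beta> \<rho> x y \<le> Qobj I \<alpha> \<beta> \<rho> (\<lambda>_ _. 0) (\<lambda>_ _. 0)"
    using minQ by (simp add: binary_def)
  also have "\<dots> = 0"
    by (simp add: Qobj_def fobj_def)
  finally have feas: "feasible I x y"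
    using Qobj_pos_of_infeasible[OF inst \<alpha>_pos \<alpha>_less_\<beta> \<beta>_big \<rho>_big bin] by fastforce
  moreover have "fobj I \<alpha> \<beta> x y \<le> fobj I \<alpha> \<beta> x' y'" if "feasible I x' y'" for x' y'
  proof -
    have "fobj I \<alpha> \<beta> x y = Qobj I \<alpha> \<beta> \<rho> x y"
      using Qobj_eq_fobj_of_feasible[OF inst feas] by simp
    also have "\<dots> \<le> Qobj I \<alpha> \<beta> \<rho> x' y'"
      using minQ that by (simp add: feasible_def)
    also have "\<dots> = fobj I \<alpha> \<beta> x' y'"
      using Qobj_eq_fobj_of_feasible[OF inst that] .
    finally show ?thesis .
  qed
  ultimately show ?thesis by blast
qed

end
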